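(* Let $p$ be an odd prime and $G=\langle a,b : (a[a^p,b])^p,\ b^p\rangle$. Then $a^p\neq 1$ in $G$; consequently the epimorphism $G\to C_p*C_p=\langle\alpha,\beta:\alpha^p,\beta^p\rangle$, $a\mapsto\alpha$, $b\mapsto\beta$, has nontrivial kernel, and $G$ is not residually nilpotent.
   Context: Commutator convention: $[x,y]=x^{-1}y^{-1}xy$. A group $G$ is residually nilpotent if $\bigcap_k\gamma_k(G)=\{1\}$, where $\gamma_1(G)=G$, $\gamma_k(G)=[G,\gamma_{k-1}(G)]$. *)

theory Defs
  imports "HOL-Algebra.Algebra"
begin

text \<open>A letter is a pair (generator, inverted?); (g, False) is g, (g, True) is g^-1.\<close>

fun red_cons :: "('g \<times> bool) \<Rightarrow> ('g \<times> bool) list \<Rightarrow> ('g \<times> bool) list" where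
  "red_cons x [] = [x]"
| "red_cons x (y # ys) = (if fst x = fst y \<and> snd x \<noteq> snd y then ys else x # y # ys)"

definition normalize :: "('g \<times> bool) list \<Rightarrow> ('g \<times> bool) list" where
  "normalize w = foldr red_cons w []"

definition reduced :: "('g \<times> bool) list \<Rightarrow> bool" where
  "reduced w \<longleftrightarrow> (\<forall>i. Suc i < length w \<longrightarrow>
      \<not> (fst (w ! i) = fst (w ! Suc i) \<and> snd (w ! i) \<noteq> snd (w ! Suc i)))"

definition free_group :: "'g set \<Rightarrow> (('g \<times> bool) list) monoid" where
  "free_group S = \<lparr> carrier = {w. fst ` set w \<subseteq> S \<and> reduced w},
                    monoid.mult = (\<lambda>x y. normalize (x @ y)),
                    monoid.one = [] \<rparr>"

definition comm :: "('a, 'b) monoid_scheme \<Rightarrow> 'a \<Rightarrow> 'a \<Rightarrow> 'a" where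
  "comm G x y = inv\<^bsub>G\<^esub> x \<otimes>\<^bsub>G\<^esub> inv\<^bsub>G\<^esub> y \<otimes>\<^bsub>G\<^esub> x \<otimes>\<^bsub>G\<^esub> y"

definition normal_closure :: "('a, 'b) monoid_scheme \<Rightarrow> 'a set \<Rightarrow> 'a set" where
  "normal_closure G A =
     generate G {g \<otimes>\<^bsub>G\<^esub> r \<otimes>\<^bsub>G\<^esub> inv\<^bsub>G\<^esub> g | g r. g \<in> carrier G \<and> r \<in> A}"

definition presented_group :: "'g set \<Rightarrow> ('g \<times> bool) list set \<Rightarrow> (('g \<times> bool) list set) monoid" where
  "presented_group S R = free_group S Mod normal_closure (free_group S) R"

definition pres_class :: "'g set \<Rightarrow> ('g \<times> bool) list set \<Rightarrow> ('g \<times> bool) list \<Rightarrow> ('g \<times> bool) list set" where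
  "pres_class S R w = normal_closure (free_group S) R #>\<^bsub>free_group S\<^esub> w"

text \<open>Lower central series, shifted: lower_central G k = gamma_(k+1)(G).
  gamma_1 = G, gamma_(k+1) = [G, gamma_k].\<close>
fun lower_central :: "('a, 'b) monoid_scheme \<Rightarrow> nat \<Rightarrow> 'a set" where
  "lower_central G 0 = carrier G"
| "lower_central G (Suc k) = generate G {comm G x y | x y. x \<in> carrier G \<and> y \<in> lower_central G k}"

definition residually_nilpotent :: "('a, 'b) monoid_scheme \<Rightarrow> bool" where
  "residually_nilpotent G \<longleftrightarrow> (\<Inter>k. lower_central G k) = {\<one>\<^bsub>G\<^esub>}"

text \<open>Two generators: False is a (resp. alpha), True is b (resp. beta).\<close>
abbreviation F2 :: "((bool \<times> bool) list) monoid" where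
  "F2 \<equiv> free_group (UNIV :: bool set)"

definition gen_a :: "(bool \<times> bool) list" where "gen_a = [(False, False)]"
definition gen_b :: "(bool \<times> bool) list" where "gen_b = [(True, False)]"

definition rels_G :: "nat \<Rightarrow> (bool \<times> bool) list set" where
  "rels_G p = { (gen_a \<otimes>\<^bsub>F2\<^esub> comm F2 (gen_a [^]\<^bsub>F2\<^esub> p) gen_b) [^]\<^bsub>F2\<^esub> p,
                gen_b [^]\<^bsub>F2\<^esub> p }"

definition rels_C :: "nat \<Rightarrow> (bool \<times> bool) list set" where
  "rels_C p = { gen_a [^]\<^bsub>F2\<^esub> p, gen_b [^]\<^bsub>F2\<^esub> p }"

definition G_grp :: "nat \<Rightarrow> ((bool \<times> bool) list set) monoid" where
  "G_grp p = presented_group UNIV (rels_G p)"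

definition CpCp :: "nat \<Rightarrow> ((bool \<times> bool) list set) monoid" where
  "CpCp p = presented_group UNIV (rels_C p)"

end

theory Submission
  imports Defs "HOL-Number_Theory.Cong"
begin

(* Everything rests on one fact: a^p is nontrivial in
   G = <a, b | (a[a^p,b])^p, b^p>.  To see it we map G into the affine group of Z/nZ,
   n = p^p - (p-1)^p, by a |-> (x |-> x + 1) and b |-> (x |-> k x), where k = p/(p-1) mod n.
   Elementary number theory gives k^p = 1 and k^(p-1) p = p - 1 (mod n); these make
   a[a^p,b] and b^p act trivially, so both relators die, while a^p acts as x |-> x + p,
   which is not the identity.  The remaining claims are then formal:
   the relators of G hold in C_p * C_p (there a^p = 1), giving the epimorphism
   a |-> alpha, b |-> beta, whose kernel contains a^p; and in any group a relation
   (x[x^p,y])^p = 1 forces x^p into every term of the lower central series.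
   Primality and oddness of p are used only through p >= 2; the argument works for all such p.
   The file develops: free groups on reduced words and their universal property;
   normal closures and presented groups (von Dyck's substitution principle, quotient maps
   between presentations); the lower central series lemma; affine maps modulo n; the
   number theory; and finally the specific groups and the theorem. *)

section \<open>Free groups on reduced words\<close>

definition flip_letter :: "('g \<times> bool) \<Rightarrow> ('g \<times> bool)" where
  "flip_letter c = (fst c, \<not> snd c)"

lemma cancels_iff_flip: "(fst x = fst y \<and> snd x \<noteq> snd y) \<longleftrightarrow> y = flip_letter x"
  by (cases x; cases y) (auto simp: flip_letter_def)

lemma flip_flip_letter [simp]: "flip_letter (flip_letter c) = c"
  and fst_flip_letter [simp]: "fst (flip_letter c) = fst c"
  and snd_flip_letter [simp]: "snd (flip_letter c) = (\<not> snd c)"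
  by (simp_all add: flip_letter_def)

lemma red_cons_Cons: "red_cons x (y # ys) = (if y = flip_letter x then ys else x # y # ys)"
  using cancels_iff_flip[of x y] by auto

declare red_cons.simps(2) [simp del]

lemma reduced_Nil [simp]: "reduced []"
  and reduced_single [simp]: "reduced [x]"
  by (simp_all add: reduced_def)

lemma reduced_Cons2: "reduced (x # y # ys) \<longleftrightarrow> y \<noteq> flip_letter x \<and> reduced (y # ys)"
proof
  assume r: "reduced (x # y # ys)"
  have "y \<noteq> flip_letter x"
    using r[unfolded reduced_def, rule_format, of 0] by (auto simp: cancels_iff_flip)
  moreover have "reduced (y # ys)"
    unfolding reduced_def using r[unfolded reduced_def, rule_format, of "Suc _"] by auto
  ultimately show "y \<noteq> flip_letter x \<and> reduced (y # ys)" by simp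
next
  assume h: "y \<noteq> flip_letter x \<and> reduced (y # ys)"
  show "reduced (x # y # ys)" unfolding reduced_def
  proof (intro allI impI)
    fix i assume "Suc i < length (x # y # ys)"
    then show "\<not> (fst ((x # y # ys) ! i) = fst ((x # y # ys) ! Suc i)
        \<and> snd ((x # y # ys) ! i) \<noteq> snd ((x # y # ys) ! Suc i))"
      using h cancels_iff_flip[of x y] unfolding reduced_def by (cases i) auto
  qed
qed

lemma reduced_tl: "reduced (x # ys) \<Longrightarrow> reduced ys"
  by (cases ys) (auto simp: reduced_Cons2)

lemma reduced_red_cons: "reduced z \<Longrightarrow> reduced (red_cons x z)"
  by (cases z) (auto simp: red_cons_Cons reduced_Cons2 intro: reduced_tl)

text \<open>A word acts on reduced words by successive reducing prepends; normalizing is acting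
  on the empty word.  This action is the tool for proving associativity.\<close>
definition word_act :: "('g \<times> bool) list \<Rightarrow> ('g \<times> bool) list \<Rightarrow> ('g \<times> bool) list" where
  "word_act w z = foldr red_cons w z"

lemma word_act_Nil [simp]: "word_act [] z = z"
  and word_act_Cons [simp]: "word_act (c # w) z = red_cons c (word_act w z)"
  and word_act_append: "word_act (x @ y) z = word_act x (word_act y z)"
  and normalize_word_act: "normalize w = word_act w []"
  by (simp_all add: word_act_def normalize_def)

lemma reduced_word_act: "reduced z \<Longrightarrow> reduced (word_act w z)"
  by (induction w) (auto intro: reduced_red_cons)

lemma reduced_normalize: "reduced (normalize w)"
  by (simp add: normalize_word_act reduced_word_act)

lemma normalize_reduced: "reduced w \<Longrightarrow> normalize w = w"
proof (induction w)
  case (Cons c w)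
  then have "normalize w = w" using reduced_tl by blast
  then show ?case using Cons.prems
    by (cases w) (auto simp: normalize_word_act red_cons_Cons reduced_Cons2)
qed (simp add: normalize_word_act)

lemma red_cons_flip: "reduced z \<Longrightarrow> red_cons (flip_letter d) (red_cons d z) = z"
proof (cases z)
  case (Cons y ys)
  assume "reduced z"
  then show ?thesis
    using Cons by (cases "y = flip_letter d"; cases ys) (auto simp: red_cons_Cons reduced_Cons2)
qed (simp add: red_cons_Cons)

text \<open>Key identity: acting by a word only depends on its normal form.\<close>
lemma red_cons_word_act:
  "reduced z \<Longrightarrow> red_cons c (word_act v z) = word_act (red_cons c v) z"
proof (cases v)
  case (Cons d vs)
  assume "reduced z"
  then show ?thesis
    using Cons red_cons_flip[OF reduced_word_act[OF \<open>reduced z\<close>, of vs], of d]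
    by (auto simp: red_cons_Cons)
qed simp

lemma word_act_normalize: "reduced z \<Longrightarrow> word_act (normalize w) z = word_act w z"
  by (induction w) (simp_all add: normalize_word_act red_cons_word_act[symmetric])

lemma normalize_append: "normalize (x @ y) = word_act x (normalize y)"
  by (simp add: normalize_word_act word_act_append)

definition inv_word :: "('g \<times> bool) list \<Rightarrow> ('g \<times> bool) list" where
  "inv_word w = rev (map flip_letter w)"

lemma word_act_inv_word: "reduced w \<Longrightarrow> word_act (inv_word w) w = []"
proof (induction w)
  case (Cons c w)
  have "word_act (inv_word (c # w)) (c # w) = word_act (inv_word w) w"
    by (simp add: inv_word_def word_act_append red_cons_Cons)
  then show ?case using Cons reduced_tl by metis
qed (simp add: inv_word_def)

lemma carrier_free_group: "carrier (free_group UNIV) = {w. reduced w}"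
  and mult_free_group: "x \<otimes>\<^bsub>free_group UNIV\<^esub> y = normalize (x @ y)"
  and one_free_group: "\<one>\<^bsub>free_group UNIV\<^esub> = []"
  by (simp_all add: free_group_def)

lemma group_free_group: "group (free_group (UNIV :: 'g set))"
proof (rule groupI)
  fix x y z :: "('g \<times> bool) list"
  show "x \<otimes>\<^bsub>free_group UNIV\<^esub> y \<otimes>\<^bsub>free_group UNIV\<^esub> z
      = x \<otimes>\<^bsub>free_group UNIV\<^esub> (y \<otimes>\<^bsub>free_group UNIV\<^esub> z)"
  proof -
    have "normalize (normalize (x @ y) @ z) = word_act (normalize (x @ y)) (normalize z)"
      by (simp only: normalize_append)
    also have "\<dots> = word_act x (normalize (y @ z))"
      by (subst word_act_normalize[OF reduced_normalize]) (simp only: word_act_append normalize_append)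
    also have "\<dots> = normalize (x @ normalize (y @ z))"
      by (simp add: normalize_append normalize_reduced reduced_word_act reduced_normalize)
    finally show ?thesis by (simp add: mult_free_group)
  qed
next
  fix x :: "('g \<times> bool) list"
  assume x: "x \<in> carrier (free_group UNIV)"
  then show "\<one>\<^bsub>free_group UNIV\<^esub> \<otimes>\<^bsub>free_group UNIV\<^esub> x = x"
    by (simp add: carrier_free_group mult_free_group one_free_group normalize_reduced)
  show "\<exists>y\<in>carrier (free_group UNIV). y \<otimes>\<^bsub>free_group UNIV\<^esub> x = \<one>\<^bsub>free_group UNIV\<^esub>"
    using x by (intro bexI[of _ "normalize (inv_word x)"])
      (simp_all add: carrier_free_group mult_free_group one_free_group normalize_append
        word_act_normalize normalize_reduced word_act_inv_word reduced_normalize)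
qed (simp_all add: carrier_free_group mult_free_group one_free_group reduced_normalize)

definition letter_eval :: "('h, 'm) monoid_scheme \<Rightarrow> ('g \<Rightarrow> 'h) \<Rightarrow> ('g \<times> bool) \<Rightarrow> 'h" where
  "letter_eval H h c = (if snd c then inv\<^bsub>H\<^esub> (h (fst c)) else h (fst c))"

definition word_eval :: "('h, 'm) monoid_scheme \<Rightarrow> ('g \<Rightarrow> 'h) \<Rightarrow> ('g \<times> bool) list \<Rightarrow> 'h" where
  "word_eval H h w = foldr (\<lambda>c acc. letter_eval H h c \<otimes>\<^bsub>H\<^esub> acc) w \<one>\<^bsub>H\<^esub>"

context
  fixes H :: "('h, 'm) monoid_scheme" and h :: "'g \<Rightarrow> 'h"
  assumes group_H: "group H" and h_closed: "\<And>g. h g \<in> carrier H"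
begin

interpretation H: group H by (rule group_H)

lemma word_eval_Nil [simp]: "word_eval H h [] = \<one>\<^bsub>H\<^esub>"
  and word_eval_Cons [simp]: "word_eval H h (c # w) = letter_eval H h c \<otimes>\<^bsub>H\<^esub> word_eval H h w"
  by (simp_all add: word_eval_def)

lemma letter_eval_closed: "letter_eval H h c \<in> carrier H"
  by (simp add: letter_eval_def h_closed)

lemma word_eval_closed: "word_eval H h w \<in> carrier H"
  by (induction w) (simp_all add: letter_eval_closed)

lemma word_eval_red_cons: "word_eval H h (red_cons c z) = letter_eval H h c \<otimes>\<^bsub>H\<^esub> word_eval H h z"
proof (cases z)
  case (Cons y ys)
  have "letter_eval H h c \<otimes>\<^bsub>H\<^esub> (letter_eval H h (flip_letter c) \<otimes>\<^bsub>H\<^esub> t) = t"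
    if "t \<in> carrier H" for t
    using that h_closed[of "fst c"]
    by (cases "snd c") (simp_all add: letter_eval_def flip_letter_def H.m_assoc[symmetric])
  then show ?thesis using Cons by (simp add: red_cons_Cons word_eval_closed)
qed simp

lemma word_eval_word_act: "word_eval H h (word_act w z) = word_eval H h w \<otimes>\<^bsub>H\<^esub> word_eval H h z"
  by (induction w)
    (simp_all add: word_eval_red_cons word_eval_closed letter_eval_closed H.m_assoc)

lemma word_eval_normalize: "word_eval H h (normalize w) = word_eval H h w"
  by (simp add: normalize_word_act word_eval_word_act word_eval_closed)

lemma word_eval_hom: "word_eval H h \<in> hom (free_group UNIV) H"
proof (rule homI)
  fix x y :: "('g \<times> bool) list"
  have "word_eval H h (normalize (x @ y)) = word_eval H h (word_act x (normalize y))"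
    by (simp only: normalize_append)
  then show "word_eval H h (x \<otimes>\<^bsub>free_group UNIV\<^esub> y) = word_eval H h x \<otimes>\<^bsub>H\<^esub> word_eval H h y"
    by (simp only: mult_free_group word_eval_word_act word_eval_normalize)
qed (simp add: word_eval_closed)

lemma word_eval_generator: "word_eval H h [(g, False)] = h g"
  by (simp add: letter_eval_def h_closed)

end

section \<open>Normal closures and presented groups\<close>

lemma (in group) generate_normalI:
  assumes T: "T \<subseteq> carrier G"
    and conj: "\<And>g t. g \<in> carrier G \<Longrightarrow> t \<in> T \<Longrightarrow> g \<otimes> t \<otimes> inv g \<in> generate G T"
  shows "generate G T \<lhd> G"
proof -
  have sg: "subgroup (generate G T) G" by (rule generate_is_subgroup[OF T])
  have "g \<otimes> x \<otimes> inv g \<in> generate G T" if g: "g \<in> carrier G" and x: "x \<in> generate G T" for g x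
    using x
  proof (induction rule: generate.induct)
    case one then show ?case using g by (simp add: generate.one)
  next
    case (incl t) then show ?case using conj g by blast
  next
    case (inv t)
    have "g \<otimes> inv t \<otimes> inv g = inv (g \<otimes> t \<otimes> inv g)"
      using g inv T by (auto simp add: inv_mult_group m_assoc)
    then show ?case using conj[OF g inv] subgroup.m_inv_closed[OF sg] by simp
  next
    case (eng h1 h2)
    have "h1 \<in> carrier G" "h2 \<in> carrier G"
      using eng.hyps subgroup.subset[OF sg] by blast+
    moreover have "inv g \<otimes> (g \<otimes> z) = z" if "z \<in> carrier G" for z
      using g that by (simp add: m_assoc[symmetric])
    ultimately have "g \<otimes> (h1 \<otimes> h2) \<otimes> inv g = (g \<otimes> h1 \<otimes> inv g) \<otimes> (g \<otimes> h2 \<otimes> inv g)"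
      using g by (simp add: m_assoc)
    then show ?case using eng.IH generate.eng by metis
  qed
  then show ?thesis using sg normal_inv_iff by blast
qed

lemma (in group) normal_closure_normal:
  assumes "R \<subseteq> carrier G"
  shows "normal_closure G R \<lhd> G"
  unfolding normal_closure_def
proof (rule generate_normalI)
  fix g t assume g: "g \<in> carrier G" and "t \<in> {g \<otimes> r \<otimes> inv g |g r. g \<in> carrier G \<and> r \<in> R}"
  then obtain g' r where t: "t = g' \<otimes> r \<otimes> inv g'" and g': "g' \<in> carrier G" and r: "r \<in> R"
    by blast
  have "g \<otimes> t \<otimes> inv g = (g \<otimes> g') \<otimes> r \<otimes> inv (g \<otimes> g')"
    using g g' r assms by (auto simp add: t m_assoc inv_mult_group)
  then show "g \<otimes> t \<otimes> inv g \<in> generate G {g \<otimes> r \<otimes> inv g |g r. g \<in> carrier G \<and> r \<in> R}"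
    using g g' r by (auto intro!: generate.incl)
qed (use assms in auto)

lemma (in group) normal_closure_incl:
  assumes "R \<subseteq> carrier G" shows "R \<subseteq> normal_closure G R"
proof
  fix r assume r: "r \<in> R"
  then have "r = \<one> \<otimes> r \<otimes> inv \<one>" using assms by auto
  then show "r \<in> normal_closure G R"
    unfolding normal_closure_def using r by (blast intro: generate.incl)
qed

lemma (in group) normal_closure_min:
  assumes N: "N \<lhd> G" and R: "R \<subseteq> N"
  shows "normal_closure G R \<subseteq> N"
  unfolding normal_closure_def
proof (rule generate_subgroup_incl)
  show "subgroup N G" using N normal_imp_subgroup by blast
  show "{g \<otimes> r \<otimes> inv g |g r. g \<in> carrier G \<and> r \<in> R} \<subseteq> N"
    using N R normal_inv_iff by blast
qed

lemma group_homI: "group G \<Longrightarrow> group H \<Longrightarrow> h \<in> hom G H \<Longrightarrow> group_hom G H h"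
  by (simp add: group_hom_def group_hom_axioms_def)

context
  fixes R :: "('g \<times> bool) list set"
  assumes R_closed: "R \<subseteq> carrier (free_group UNIV)"
begin

interpretation F: group "free_group (UNIV :: 'g set)" by (rule group_free_group)

lemma normal_closure_relators: "normal_closure (free_group UNIV) R \<lhd> free_group UNIV"
  by (rule F.normal_closure_normal[OF R_closed])

lemma pres_class_hom: "group_hom (free_group UNIV) (presented_group UNIV R) (pres_class UNIV R)"
  unfolding presented_group_def pres_class_def
  by (rule group_homI[OF group_free_group normal.factorgroup_is_group normal.r_coset_hom_Mod])
    (rule normal_closure_relators)+

lemma carrier_presented_group:
  "carrier (presented_group UNIV R) = pres_class UNIV R ` carrier (free_group UNIV)"
  by (simp add: presented_group_def carrier_FactGroup pres_class_def)

lemma pres_class_eq_one_iff: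
  assumes "w \<in> carrier (free_group UNIV)"
  shows "pres_class UNIV R w = \<one>\<^bsub>presented_group UNIV R\<^esub> \<longleftrightarrow> w \<in> normal_closure (free_group UNIV) R"
proof -
  have "subgroup (normal_closure (free_group UNIV) R) (free_group UNIV)"
    using normal_closure_relators normal_imp_subgroup by blast
  then show ?thesis
    unfolding presented_group_def pres_class_def
    using F.rcos_self[OF assms] subgroup.rcos_const[OF _ group_free_group] by auto
qed

lemma pres_class_relator: "r \<in> R \<Longrightarrow> pres_class UNIV R r = \<one>\<^bsub>presented_group UNIV R\<^esub>"
  using pres_class_eq_one_iff F.normal_closure_incl[OF R_closed] R_closed by blast

lemma pres_class_neq_one:
  assumes "group H" and f: "f \<in> hom (free_group UNIV) H"
    and kills: "\<And>r. r \<in> R \<Longrightarrow> f r = \<one>\<^bsub>H\<^esub>"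
    and w: "w \<in> carrier (free_group UNIV)" and not_killed: "f w \<noteq> \<one>\<^bsub>H\<^esub>"
  shows "pres_class UNIV R w \<noteq> \<one>\<^bsub>presented_group UNIV R\<^esub>"
proof -
  interpret f: group_hom "free_group UNIV" H f by (rule group_homI[OF group_free_group]) fact+
  have "normal_closure (free_group UNIV) R \<subseteq> kernel (free_group UNIV) H f"
    using kills R_closed by (intro F.normal_closure_min f.normal_kernel) (auto simp: kernel_def)
  then show ?thesis using pres_class_eq_one_iff[OF w] not_killed by (auto simp: kernel_def)
qed

end

text \<open>If the relators R hold modulo the relators R', then w R |-> w R' is a well-defined
  epimorphism between the presented groups.\<close>
definition pres_quot :: "('g \<times> bool) list set \<Rightarrow> ('g \<times> bool) list set \<Rightarrow> ('g \<times> bool) list set" where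
  "pres_quot R' U = the_elem (pres_class UNIV R' ` U)"

context
  fixes R R' :: "('g \<times> bool) list set"
  assumes R_closed: "R \<subseteq> carrier (free_group UNIV)"
    and R'_closed: "R' \<subseteq> carrier (free_group UNIV)"
    and R_holds: "R \<subseteq> normal_closure (free_group UNIV) R'"
begin

interpretation F: group "free_group (UNIV :: 'g set)" by (rule group_free_group)

lemma pres_quot_class:
  assumes w: "w \<in> carrier (free_group UNIV)"
  shows "pres_quot R' (pres_class UNIV R w) = pres_class UNIV R' w"
proof -
  let ?N = "normal_closure (free_group UNIV) R" and ?N' = "normal_closure (free_group UNIV) R'"
  have sg: "subgroup ?N (free_group UNIV)" "subgroup ?N' (free_group UNIV)"
    using normal_closure_relators[OF R_closed] normal_closure_relators[OF R'_closed]
    by (auto dest: normal_imp_subgroup)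
  have sub: "?N \<subseteq> ?N'"
    by (rule F.normal_closure_min[OF normal_closure_relators[OF R'_closed] R_holds])
  txt \<open>Since N(R) is contained in N(R'), the whole N(R)-coset of w lies in one N(R')-coset.\<close>
  have "?N' #>\<^bsub>free_group UNIV\<^esub> (x \<otimes>\<^bsub>free_group UNIV\<^esub> w) = ?N' #>\<^bsub>free_group UNIV\<^esub> w"
    if x: "x \<in> ?N" for x
  proof -
    have xN': "x \<in> ?N'" using x sub by blast
    then have "?N' #>\<^bsub>free_group UNIV\<^esub> (x \<otimes>\<^bsub>free_group UNIV\<^esub> w)
        = (?N' #>\<^bsub>free_group UNIV\<^esub> x) #>\<^bsub>free_group UNIV\<^esub> w"
      using subgroup.subset[OF sg(2)] w by (simp add: F.coset_mult_assoc subset_iff)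
    also have "?N' #>\<^bsub>free_group UNIV\<^esub> x = ?N'"
      by (rule subgroup.rcos_const[OF sg(2) group_free_group xN'])
    finally show ?thesis .
  qed
  then have "pres_class UNIV R' ` pres_class UNIV R w \<subseteq> {pres_class UNIV R' w}"
    unfolding pres_class_def r_coset_def by auto
  moreover have "w \<in> pres_class UNIV R w"
    using F.rcos_self[OF w sg(1)] by (simp add: pres_class_def)
  ultimately have "pres_class UNIV R' ` pres_class UNIV R w = {pres_class UNIV R' w}"
    by blast
  then show ?thesis by (simp add: pres_quot_def)
qed

lemma pres_quot_hom: "pres_quot R' \<in> hom (presented_group UNIV R) (presented_group UNIV R')"
proof -
  interpret q: group_hom "free_group UNIV" "presented_group UNIV R" "pres_class UNIV R"
    by (rule pres_class_hom[OF R_closed])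
  interpret q': group_hom "free_group UNIV" "presented_group UNIV R'" "pres_class UNIV R'"
    by (rule pres_class_hom[OF R'_closed])
  show ?thesis
  proof (rule homI)
    fix U assume "U \<in> carrier (presented_group UNIV R)"
    then obtain x where "x \<in> carrier (free_group UNIV)" "U = pres_class UNIV R x"
      by (auto simp: carrier_presented_group[OF R_closed])
    then show "pres_quot R' U \<in> carrier (presented_group UNIV R')"
      by (simp add: pres_quot_class)
  next
    fix U V assume "U \<in> carrier (presented_group UNIV R)" "V \<in> carrier (presented_group UNIV R)"
    then obtain x y where x: "x \<in> carrier (free_group UNIV)" and U: "U = pres_class UNIV R x"
      and y: "y \<in> carrier (free_group UNIV)" and V: "V = pres_class UNIV R y"
      by (auto simp: carrier_presented_group[OF R_closed])
    have "pres_quot R' (U \<otimes>\<^bsub>presented_group UNIV R\<^esub> V)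
        = pres_quot R' (pres_class UNIV R (x \<otimes>\<^bsub>free_group UNIV\<^esub> y))"
      by (simp only: U V q.hom_mult[OF x y])
    also have "\<dots> = pres_class UNIV R' (x \<otimes>\<^bsub>free_group UNIV\<^esub> y)"
      by (rule pres_quot_class[OF F.m_closed[OF x y]])
    also have "\<dots> = pres_quot R' U \<otimes>\<^bsub>presented_group UNIV R'\<^esub> pres_quot R' V"
      using x y by (simp only: U V pres_quot_class q'.hom_mult)
    finally show "pres_quot R' (U \<otimes>\<^bsub>presented_group UNIV R\<^esub> V)
        = pres_quot R' U \<otimes>\<^bsub>presented_group UNIV R'\<^esub> pres_quot R' V" .
  qed
qed

lemma pres_quot_epi: "pres_quot R' \<in> epi (presented_group UNIV R) (presented_group UNIV R')"
proof -
  have "pres_quot R' ` carrier (presented_group UNIV R)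
      = (\<lambda>w. pres_quot R' (pres_class UNIV R w)) ` carrier (free_group UNIV)"
    by (simp only: carrier_presented_group[OF R_closed] image_image)
  also have "\<dots> = carrier (presented_group UNIV R')"
    by (simp only: carrier_presented_group[OF R'_closed] pres_quot_class cong: image_cong)
  finally have "pres_quot R' ` carrier (presented_group UNIV R) = carrier (presented_group UNIV R')" .
  with pres_quot_hom show ?thesis by (simp add: epi_def)
qed

end

section \<open>Commutators and the lower central series\<close>

definition power_comm_relator :: "('a, 'b) monoid_scheme \<Rightarrow> nat \<Rightarrow> 'a \<Rightarrow> 'a \<Rightarrow> 'a" where
  "power_comm_relator G p x y = (x \<otimes>\<^bsub>G\<^esub> comm G (x [^]\<^bsub>G\<^esub> p) y) [^]\<^bsub>G\<^esub> p"

lemma (in group) comm_closed [simp]: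
  "x \<in> carrier G \<Longrightarrow> y \<in> carrier G \<Longrightarrow> comm G x y \<in> carrier G"
  by (simp add: comm_def)

lemma (in group) power_comm_relator_closed:
  "x \<in> carrier G \<Longrightarrow> y \<in> carrier G \<Longrightarrow> power_comm_relator G p x y \<in> carrier G"
  by (simp add: power_comm_relator_def)

lemma (in group_hom) hom_power_comm_relator:
  assumes "x \<in> carrier G" "y \<in> carrier G"
  shows "h (power_comm_relator G p x y) = power_comm_relator H p (h x) (h y)"
  using assms by (simp add: power_comm_relator_def comm_def hom_nat_pow)

lemma (in group) power_comm_relator_trivial:
  assumes "x \<in> carrier G" "y \<in> carrier G" "x [^] p = \<one>"
  shows "power_comm_relator G p x y = \<one>"
  using assms by (simp add: power_comm_relator_def comm_def)

lemma (in group) conj_comm: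
  assumes "g \<in> carrier G" "x \<in> carrier G" "y \<in> carrier G"
  shows "g \<otimes> comm G x y \<otimes> inv g = comm G (x \<otimes> inv g) y \<otimes> inv (comm G (inv g) y)"
proof -
  have cancel: "a \<otimes> (inv a \<otimes> z) = z" "inv a \<otimes> (a \<otimes> z) = z"
    if "a \<in> carrier G" "z \<in> carrier G" for a z
    using that by (simp_all add: m_assoc[symmetric])
  show ?thesis using assms by (simp add: comm_def inv_mult_group m_assoc cancel)
qed

lemma (in group) lower_central_normal: "lower_central G k \<lhd> G"
proof (induction k)
  case 0 then show ?case by (simp add: normal_self)
next
  case (Suc k)
  have L: "lower_central G k \<subseteq> carrier G"
    using Suc normal_imp_subgroup subgroup.subset by blast
  let ?T = "{comm G x y | x y. x \<in> carrier G \<and> y \<in> lower_central G k}"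
  show ?case unfolding lower_central.simps
  proof (rule generate_normalI)
    fix g t assume g: "g \<in> carrier G" and "t \<in> ?T"
    then obtain x y where t: "t = comm G x y" and x: "x \<in> carrier G"
      and y: "y \<in> lower_central G k" by blast
    have "y \<in> carrier G" using y L by blast
    then have split: "g \<otimes> t \<otimes> inv g = comm G (x \<otimes> inv g) y \<otimes> inv (comm G (inv g) y)"
      using conj_comm[OF g x] t by simp
    have "comm G (x \<otimes> inv g) y \<in> generate G ?T" "inv (comm G (inv g) y) \<in> generate G ?T"
      using x g y by (blast intro: generate.incl generate.inv)+
    then show "g \<otimes> t \<otimes> inv g \<in> generate G ?T"
      unfolding split by (rule generate.eng)
  qed (use L in auto)
qed

lemma (in group) inv_of_comm: "x \<in> carrier G \<Longrightarrow> y \<in> carrier G \<Longrightarrow> inv (comm G x y) = comm G y x"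
  by (simp add: comm_def inv_mult_group m_assoc)

text \<open>A relation (x[x^p,y])^p = 1 puts x^p in every term of the lower central series:
  if x^p lies in gamma_k, then [x^p, y] lies in gamma_(k+1), so modulo gamma_(k+1)
  the relation says x^p = 1.\<close>
lemma (in group) power_in_lower_central:
  assumes x: "x \<in> carrier G" and y: "y \<in> carrier G"
    and rel: "power_comm_relator G p x y = \<one>"
  shows "x [^] p \<in> lower_central G k"
proof (induction k)
  case 0 then show ?case using x by simp
next
  case (Suc k)
  let ?N = "lower_central G (Suc k)"
  interpret N: normal ?N G by (rule lower_central_normal)
  interpret \<pi>: group_hom G "G Mod ?N" "\<lambda>a. ?N #> a"
    by (rule group_homI[OF is_group N.factorgroup_is_group N.r_coset_hom_Mod])
  let ?c = "comm G (x [^] p) y"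
  have c: "?c \<in> carrier G" using x y by simp
  have "comm G y (x [^] p) \<in> ?N"
    unfolding lower_central.simps using y Suc by (intro generate.incl) blast
  then have "inv (comm G y (x [^] p)) \<in> ?N" by (rule N.m_inv_closed)
  then have "?c \<in> ?N" using inv_of_comm[OF y] x by simp
  then have c_trivial: "?N #> ?c = \<one>\<^bsub>G Mod ?N\<^esub>" using N.rcos_const[OF is_group] by simp
  have "?N #> (x \<otimes> ?c) = (?N #> x) \<otimes>\<^bsub>G Mod ?N\<^esub> (?N #> ?c)" by (rule \<pi>.hom_mult[OF x c])
  also have "\<dots> = ?N #> x" by (simp only: c_trivial \<pi>.H.r_one[OF \<pi>.hom_closed[OF x]])
  finally have modulo_N: "?N #> (x \<otimes> ?c) = ?N #> x" .
  have "?N #> (x [^] p) = (?N #> x) [^]\<^bsub>G Mod ?N\<^esub> p"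
    by (rule \<pi>.hom_nat_pow[OF x])
  also have "\<dots> = ?N #> power_comm_relator G p x y"
    unfolding power_comm_relator_def modulo_N[symmetric]
    using \<pi>.hom_nat_pow[OF m_closed[OF x c], of p] by simp
  also have "\<dots> = ?N" by (simp only: rel N.rcos_const[OF is_group N.one_closed])
  finally show ?case using rcos_self[OF _ N.subgroup_axioms] x by (metis nat_pow_closed)
qed

section \<open>Affine maps modulo n\<close>

text \<open>The affine map x |-> a x + c of Z/nZ, as a function on the representatives {0..<n}.\<close>
definition aff :: "int \<Rightarrow> int \<Rightarrow> int \<Rightarrow> int \<Rightarrow> int" where
  "aff n a c = (\<lambda>x\<in>{0..<n}. (a * x + c) mod n)"

context
  fixes n :: int
  assumes n_gt_1: "n > 1"
begin

interpretation Sym: group "BijGroup {0..<n}" by (rule group_BijGroup)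

lemma aff_in_range: "x \<in> {0..<n} \<Longrightarrow> aff n a c x \<in> {0..<n}"
  using n_gt_1 by (simp add: aff_def)

lemma aff_comp_apply:
  assumes x: "x \<in> {0..<n}"
  shows "aff n a c (aff n a' c' x) = aff n (a * a') (a * c' + c) x"
proof -
  have "aff n a c (aff n a' c' x) = (a * ((a' * x + c') mod n) + c) mod n"
    using x aff_in_range[OF x] by (simp add: aff_def)
  also have "\<dots> = (a * (a' * x + c') + c) mod n"
    by (metis mod_add_left_eq mod_mult_right_eq)
  also have "\<dots> = (a * a' * x + (a * c' + c)) mod n"
    by (simp add: algebra_simps)
  finally show ?thesis using x by (simp add: aff_def)
qed

lemma aff_comp: "compose {0..<n} (aff n a c) (aff n a' c') = aff n (a * a') (a * c' + c)"
proof
  fix x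
  show "compose {0..<n} (aff n a c) (aff n a' c') x = aff n (a * a') (a * c' + c) x"
  proof (cases "x \<in> {0..<n}")
    case True
    then show ?thesis by (simp add: compose_def aff_comp_apply)
  next
    case False
    then show ?thesis by (auto simp: compose_def aff_def)
  qed
qed

lemma aff_cong: "[a = a'] (mod n) \<Longrightarrow> [c = c'] (mod n) \<Longrightarrow> aff n a c = aff n a' c'"
  unfolding aff_def cong_def by (rule restrict_ext) (metis mod_add_cong mod_mult_cong)

lemma aff_id: "aff n 1 0 = (\<lambda>x\<in>{0..<n}. x)"
  unfolding aff_def by (rule restrict_ext) simp

lemma aff_Bij:
  assumes "coprime a n"
  shows "aff n a c \<in> Bij {0..<n}"
proof -
  obtain a' where a': "[a * a' = 1] (mod n)" using cong_solve_coprime_int[OF assms] by blast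
  let ?g = "aff n a' (- (a' * c))"
  have "aff n (a' * a) (a' * c + - (a' * c)) = aff n 1 0"
    using a' by (intro aff_cong) (simp_all add: mult.commute)
  then have left: "?g (aff n a c x) = x" if "x \<in> {0..<n}" for x
    using that by (simp add: aff_comp_apply aff_id)
  have "[a * a' * c = 1 * c] (mod n)" by (rule cong_mult[OF a' cong_refl])
  then have "[c - a * a' * c = c - 1 * c] (mod n)" by (rule cong_diff[OF cong_refl])
  then have "aff n (a * a') (a * - (a' * c) + c) = aff n 1 0"
    using a' by (intro aff_cong) (simp_all add: algebra_simps)
  then have right: "aff n a c (?g x) = x" if "x \<in> {0..<n}" for x
    using that by (simp add: aff_comp_apply aff_id)
  have "bij_betw (aff n a c) {0..<n} {0..<n}"
    by (rule bij_betw_byWitness[where f' = ?g]) (use left right aff_in_range in auto)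
  then show ?thesis by (simp add: Bij_def aff_def)
qed

lemma aff_carrier: "coprime a n \<Longrightarrow> aff n a c \<in> carrier (BijGroup {0..<n})"
  by (simp add: BijGroup_def aff_Bij)

lemma aff_mult:
  "coprime a n \<Longrightarrow> coprime a' n \<Longrightarrow>
    aff n a c \<otimes>\<^bsub>BijGroup {0..<n}\<^esub> aff n a' c' = aff n (a * a') (a * c' + c)"
  by (simp add: BijGroup_def aff_Bij aff_comp)

lemma aff_one: "\<one>\<^bsub>BijGroup {0..<n}\<^esub> = aff n 1 0"
  by (simp add: BijGroup_def aff_id)

lemma aff_inv:
  assumes a': "[a * a' = 1] (mod n)"
  shows "inv\<^bsub>BijGroup {0..<n}\<^esub> (aff n a c) = aff n a' (- (a' * c))"
proof (rule Sym.inv_equality)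
  have "coprime a n" "coprime a' n"
    using a' by (auto simp: coprime_iff_invertible_int mult.commute)
  moreover have "aff n (a' * a) (a' * c + - (a' * c)) = aff n 1 0"
    using a' by (intro aff_cong) (simp_all add: mult.commute)
  ultimately show "aff n a' (- (a' * c)) \<otimes>\<^bsub>BijGroup {0..<n}\<^esub> aff n a c = \<one>\<^bsub>BijGroup {0..<n}\<^esub>"
    "aff n a c \<in> carrier (BijGroup {0..<n})" "aff n a' (- (a' * c)) \<in> carrier (BijGroup {0..<n})"
    by (simp_all add: aff_mult aff_one aff_carrier)
qed

lemma translation_pow: "aff n 1 1 [^]\<^bsub>BijGroup {0..<n}\<^esub> m = aff n 1 (int m)"
  by (induction m) (simp_all add: aff_one aff_mult add.commute)

lemma dilation_pow:
  "coprime k n \<Longrightarrow> aff n k 0 [^]\<^bsub>BijGroup {0..<n}\<^esub> m = aff n (k ^ m) 0"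
  by (induction m) (simp_all add: aff_one aff_mult mult.commute)

lemma translation_pow_neq_one:
  assumes "\<not> n dvd int m"
  shows "aff n 1 1 [^]\<^bsub>BijGroup {0..<n}\<^esub> m \<noteq> \<one>\<^bsub>BijGroup {0..<n}\<^esub>"
proof
  assume "aff n 1 1 [^]\<^bsub>BijGroup {0..<n}\<^esub> m = \<one>\<^bsub>BijGroup {0..<n}\<^esub>"
  then have "aff n 1 (int m) 0 = aff n 1 0 0" by (simp add: translation_pow aff_one)
  then show False using assms n_gt_1 by (simp add: aff_def mod_eq_0_iff_dvd)
qed

text \<open>The affine maps a = (x |-> x + 1) and b = (x |-> k x) satisfy the relators of G as soon
  as k^p = 1 and k^(p-1) p = p - 1 modulo n; in fact already a [a^p, b] = 1.\<close>
lemma affine_relators: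
  fixes p :: nat and k :: int
  assumes "p \<ge> 1" and kp: "[k ^ p = 1] (mod n)"
    and kp1: "[k ^ (p - 1) * int p = int p - 1] (mod n)"
  shows "power_comm_relator (BijGroup {0..<n}) p (aff n 1 1) (aff n k 0) = \<one>\<^bsub>BijGroup {0..<n}\<^esub>"
    and "aff n k 0 [^]\<^bsub>BijGroup {0..<n}\<^esub> p = \<one>\<^bsub>BijGroup {0..<n}\<^esub>"
proof -
  let ?K = "k ^ (p - 1)"
  have "k ^ p = k * ?K" using \<open>p \<ge> 1\<close> by (cases p) simp_all
  then have kK: "[k * ?K = 1] (mod n)" using kp by simp
  then have ck: "coprime k n" and cK: "coprime ?K n"
    by (auto simp: coprime_iff_invertible_int mult.commute)
  have inv_a: "inv\<^bsub>BijGroup {0..<n}\<^esub> (aff n 1 (int p)) = aff n 1 (- int p)"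
    by (simp add: aff_inv[of 1 1])
  have inv_b: "inv\<^bsub>BijGroup {0..<n}\<^esub> (aff n k 0) = aff n ?K 0"
    by (simp add: aff_inv[OF kK])
  have "[?K * int p - int p + 1 = (int p - 1) - int p + 1] (mod n)"
    by (intro cong_add cong_diff kp1 cong_refl)
  then have "aff n (?K * k) (?K * int p - int p + 1) = aff n 1 0"
    using kK by (intro aff_cong) (simp_all add: mult.commute)
  txt \<open>Composing the four affine maps, a [a^p, b] is x |-> K k x + (K p - p + 1).\<close>
  then have "aff n 1 1 \<otimes>\<^bsub>BijGroup {0..<n}\<^esub>
      comm (BijGroup {0..<n}) (aff n 1 1 [^]\<^bsub>BijGroup {0..<n}\<^esub> p) (aff n k 0) = aff n 1 0"
    by (simp add: comm_def translation_pow inv_a inv_b aff_mult ck cK algebra_simps)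
  then show "power_comm_relator (BijGroup {0..<n}) p (aff n 1 1) (aff n k 0) = \<one>\<^bsub>BijGroup {0..<n}\<^esub>"
    by (simp add: power_comm_relator_def aff_one[symmetric])
  have "aff n (k ^ p) 0 = aff n 1 0" using kp by (intro aff_cong) simp_all
  then show "aff n k 0 [^]\<^bsub>BijGroup {0..<n}\<^esub> p = \<one>\<^bsub>BijGroup {0..<n}\<^esub>"
    by (simp add: dilation_pow[OF ck] aff_one)
qed

end

section \<open>The modulus and the multiplier\<close>

text \<open>a^(m+1) - b^(m+1) >= (a - b) a^m for 0 <= b <= a; it shows that the modulus exceeds 1.\<close>
lemma power_diff_lower_bound:
  fixes a b :: int
  assumes "0 \<le> b" "b \<le> a"
  shows "(a - b) * a ^ m \<le> a ^ Suc m - b ^ Suc m"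
proof -
  have "b * b ^ m \<le> b * a ^ m" using assms by (intro mult_left_mono power_mono) auto
  then show ?thesis by (simp add: algebra_simps)
qed

text \<open>With P = p, n = P^p - (P-1)^p and k = P/(P-1) mod n we get k^p = P^p/(P-1)^p = 1 and
  k^(p-1) P = k^p (P-1) = P - 1 modulo n.  This works for every p >= 2.\<close>
lemma affine_parameters:
  fixes p :: nat
  assumes "p \<ge> 2"
  obtains n k :: int
  where "n > 1" "[k ^ p = 1] (mod n)" "[k ^ (p - 1) * int p = int p - 1] (mod n)"
    "\<not> n dvd int p"
proof -
  define P where "P = int p"
  define n where "n = P ^ p - (P - 1) ^ p"
  obtain m where p: "p = Suc m" and "m \<ge> 1" using assms by (cases p) auto
  have P2: "P \<ge> 2" using assms by (simp add: P_def)
  have "P \<le> P ^ m" using P2 \<open>m \<ge> 1\<close> by (intro self_le_power) auto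
  also have "\<dots> = (P - (P - 1)) * P ^ m" by simp
  also have "\<dots> \<le> n" unfolding n_def p using P2 by (intro power_diff_lower_bound) auto
  finally have n_gt_1: "n > 1" using P2 by simp
  have "coprime (P - 1) n"
  proof (rule coprimeI)
    fix d assume d1: "d dvd P - 1" and d2: "d dvd n"
    have "d dvd (P - 1) ^ p" using dvd_trans[OF d1, of "(P - 1) ^ p"] by (simp add: p)
    moreover have split: "P ^ p = n + (P - 1) ^ p" by (simp add: n_def)
    ultimately have "d dvd P ^ p" using d2 by (simp only: split dvd_add)
    moreover have "coprime (P - 1) (P ^ p)" by simp
    ultimately show "is_unit d" using d1 coprime_common_divisor by blast
  qed
  then obtain q where q: "[(P - 1) * q = 1] (mod n)" using cong_solve_coprime_int by blast
  define k where "k = P * q"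
  have "[k ^ p = P ^ p * q ^ p] (mod n)" by (simp add: k_def power_mult_distrib)
  also have "[P ^ p * q ^ p = (P - 1) ^ p * q ^ p] (mod n)"
    by (rule cong_mult) (simp_all add: n_def cong_iff_dvd_diff)
  also have "(P - 1) ^ p * q ^ p = ((P - 1) * q) ^ p" by (simp add: power_mult_distrib)
  also have "[((P - 1) * q) ^ p = 1 ^ p] (mod n)" by (rule cong_pow[OF q])
  finally have kp: "[k ^ p = 1] (mod n)" by simp
  have "k * (P - 1) = P * ((P - 1) * q)" by (simp add: k_def algebra_simps)
  also have "[P * ((P - 1) * q) = P * 1] (mod n)" by (rule cong_mult[OF cong_refl q])
  finally have "[P = k * (P - 1)] (mod n)" by (simp add: cong_sym)
  then have "[k ^ m * P = k ^ m * (k * (P - 1))] (mod n)" by (rule cong_mult[OF cong_refl])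
  also have "k ^ m * (k * (P - 1)) = k ^ p * (P - 1)" by (simp add: p)
  also have "[k ^ p * (P - 1) = 1 * (P - 1)] (mod n)" by (rule cong_mult[OF kp cong_refl])
  finally have kp1: "[k ^ m * P = P - 1] (mod n)" by simp
  have "\<not> n dvd P"
  proof
    assume "n dvd P"
    then have "[k ^ m * P = k ^ m * 0] (mod n)" by (intro cong_mult cong_refl) (simp add: cong_0_iff)
    then have "[P - 1 = 0] (mod n)" using cong_trans[OF cong_sym[OF kp1]] by simp
    then have "n dvd P - 1" by (simp add: cong_0_iff)
    with \<open>n dvd P\<close> have "n dvd P - (P - 1)" by (rule dvd_diff)
    then have "n \<le> 1" using zdvd_imp_le by simp
    then show False using n_gt_1 by simp
  qed
  then show thesis using that[OF n_gt_1 kp] kp1 by (simp add: p P_def)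
qed

section \<open>The groups G and C_p * C_p\<close>

interpretation F2: group F2 by (rule group_free_group)

lemma gen_a_closed: "gen_a \<in> carrier F2"
  and gen_b_closed: "gen_b \<in> carrier F2"
  by (simp_all add: carrier_free_group gen_a_def gen_b_def)

lemma rels_G_eq: "rels_G p = {power_comm_relator F2 p gen_a gen_b, gen_b [^]\<^bsub>F2\<^esub> p}"
  by (simp add: rels_G_def power_comm_relator_def)

lemma rels_G_closed: "rels_G p \<subseteq> carrier F2"
  by (simp add: rels_G_eq F2.power_comm_relator_closed gen_a_closed gen_b_closed)

lemma rels_C_closed: "rels_C p \<subseteq> carrier F2"
  by (simp add: rels_C_def gen_a_closed gen_b_closed)

lemma G_quotient_hom: "group_hom F2 (G_grp p) (pres_class UNIV (rels_G p))"
  unfolding G_grp_def by (rule pres_class_hom[OF rels_G_closed])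

lemma C_quotient_hom: "group_hom F2 (CpCp p) (pres_class UNIV (rels_C p))"
  unfolding CpCp_def by (rule pres_class_hom[OF rels_C_closed])

text \<open>The relators of G hold in C_p * C_p, since there alpha^p = 1 kills [alpha^p, beta].\<close>
lemma rels_G_hold_in_C: "rels_G p \<subseteq> normal_closure F2 (rels_C p)"
proof -
  interpret q: group_hom F2 "CpCp p" "pres_class UNIV (rels_C p)" by (rule C_quotient_hom)
  have "pres_class UNIV (rels_C p) (gen_a [^]\<^bsub>F2\<^esub> p) = \<one>\<^bsub>CpCp p\<^esub>"
    unfolding CpCp_def by (rule pres_class_relator[OF rels_C_closed]) (simp add: rels_C_def)
  then have "pres_class UNIV (rels_C p) (power_comm_relator F2 p gen_a gen_b) = \<one>\<^bsub>CpCp p\<^esub>"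
    by (simp add: q.hom_power_comm_relator gen_a_closed gen_b_closed q.hom_nat_pow
        q.H.power_comm_relator_trivial)
  then have "power_comm_relator F2 p gen_a gen_b \<in> normal_closure F2 (rels_C p)"
    using pres_class_eq_one_iff[OF rels_C_closed] gen_a_closed gen_b_closed
    by (simp add: CpCp_def F2.power_comm_relator_closed)
  moreover have "gen_b [^]\<^bsub>F2\<^esub> p \<in> normal_closure F2 (rels_C p)"
    using F2.normal_closure_incl[OF rels_C_closed] by (auto simp: rels_C_def)
  ultimately show ?thesis by (simp add: rels_G_eq)
qed

text \<open>The heart of the matter: a^p is nontrivial in G, witnessed by the affine representation.\<close>
lemma a_power_nontrivial:
  assumes "p \<ge> 2"
  shows "pres_class UNIV (rels_G p) gen_a [^]\<^bsub>G_grp p\<^esub> p \<noteq> \<one>\<^bsub>G_grp p\<^esub>"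
proof -
  obtain n k :: int where n: "n > 1" and kp: "[k ^ p = 1] (mod n)"
    and kp1: "[k ^ (p - 1) * int p = int p - 1] (mod n)" and p_mod_n: "\<not> n dvd int p"
    using affine_parameters[OF assms] by blast
  let ?H = "BijGroup {0..<n}"
  define h where "h g = (if g then aff n k 0 else aff n 1 1)" for g :: bool
  have "coprime (k ^ p) n" using cong_imp_coprime[OF cong_sym[OF kp]] by simp
  then have "coprime k n" using assms by simp
  then have h_closed: "h g \<in> carrier ?H" for g by (simp add: h_def aff_carrier[OF n])
  interpret f: group_hom F2 ?H "word_eval ?H h"
    by (rule group_homI[OF group_free_group group_BijGroup word_eval_hom[OF group_BijGroup h_closed]])
  have fa: "word_eval ?H h gen_a = aff n 1 1" and fb: "word_eval ?H h gen_b = aff n k 0"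
    by (simp_all add: gen_a_def gen_b_def word_eval_generator[OF group_BijGroup h_closed] h_def)
  have kills: "word_eval ?H h r = \<one>\<^bsub>?H\<^esub>" if "r \<in> rels_G p" for r
    using that affine_relators[OF n _ kp kp1] assms
    by (auto simp: rels_G_eq f.hom_power_comm_relator gen_a_closed gen_b_closed fa fb f.hom_nat_pow)
  have "word_eval ?H h (gen_a [^]\<^bsub>F2\<^esub> p) \<noteq> \<one>\<^bsub>?H\<^esub>"
    using translation_pow_neq_one[OF n p_mod_n] by (simp add: f.hom_nat_pow gen_a_closed fa)
  then have "pres_class UNIV (rels_G p) (gen_a [^]\<^bsub>F2\<^esub> p) \<noteq> \<one>\<^bsub>G_grp p\<^esub>"
    unfolding G_grp_def
    by (intro pres_class_neq_one[OF rels_G_closed group_BijGroup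
          word_eval_hom[OF group_BijGroup h_closed] kills]) (simp_all add: gen_a_closed)
  then show ?thesis
    using group_hom.hom_nat_pow[OF G_quotient_hom gen_a_closed] by simp
qed

lemma a_power_in_kernel:
  assumes \<phi>: "\<phi> \<in> hom (G_grp p) (CpCp p)"
    and \<phi>_a: "\<phi> (pres_class UNIV (rels_G p) gen_a) = pres_class UNIV (rels_C p) gen_a"
  shows "pres_class UNIV (rels_G p) gen_a [^]\<^bsub>G_grp p\<^esub> p \<in> kernel (G_grp p) (CpCp p) \<phi>"
proof -
  interpret qG: group_hom F2 "G_grp p" "pres_class UNIV (rels_G p)" by (rule G_quotient_hom)
  interpret qC: group_hom F2 "CpCp p" "pres_class UNIV (rels_C p)" by (rule C_quotient_hom)
  interpret \<phi>: group_hom "G_grp p" "CpCp p" \<phi>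
    by (rule group_homI[OF qG.H.is_group qC.H.is_group \<phi>])
  have a: "pres_class UNIV (rels_G p) gen_a \<in> carrier (G_grp p)"
    by (rule qG.hom_closed[OF gen_a_closed])
  have "\<phi> (pres_class UNIV (rels_G p) gen_a [^]\<^bsub>G_grp p\<^esub> p)
      = pres_class UNIV (rels_C p) (gen_a [^]\<^bsub>F2\<^esub> p)"
    by (simp add: \<phi>.hom_nat_pow[OF a] \<phi>_a qC.hom_nat_pow gen_a_closed)
  also have "\<dots> = \<one>\<^bsub>CpCp p\<^esub>"
    unfolding CpCp_def by (rule pres_class_relator[OF rels_C_closed]) (simp add: rels_C_def)
  finally show ?thesis using a by (simp add: kernel_def)
qed

lemma a_power_in_lower_central:
  "pres_class UNIV (rels_G p) gen_a [^]\<^bsub>G_grp p\<^esub> p \<in> lower_central (G_grp p) k"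
proof -
  interpret qG: group_hom F2 "G_grp p" "pres_class UNIV (rels_G p)" by (rule G_quotient_hom)
  have "power_comm_relator (G_grp p) p (pres_class UNIV (rels_G p) gen_a)
      (pres_class UNIV (rels_G p) gen_b)
      = pres_class UNIV (rels_G p) (power_comm_relator F2 p gen_a gen_b)"
    by (simp add: qG.hom_power_comm_relator gen_a_closed gen_b_closed)
  also have "\<dots> = \<one>\<^bsub>G_grp p\<^esub>"
    unfolding G_grp_def by (rule pres_class_relator[OF rels_G_closed]) (simp add: rels_G_eq)
  finally show ?thesis
    by (rule qG.H.power_in_lower_central[OF qG.hom_closed qG.hom_closed, OF gen_a_closed gen_b_closed])
qed

theorem mainTheorem11:
  fixes p :: nat
  assumes "Factorial_Ring.prime p" and "odd p"
  shows "pres_class UNIV (rels_G p) gen_a [^]\<^bsub>G_grp p\<^esub> p \<noteq> \<one>\<^bsub>G_grp p\<^esub>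
    \<and> (\<exists>\<phi>. \<phi> \<in> epi (G_grp p) (CpCp p)
           \<and> \<phi> (pres_class UNIV (rels_G p) gen_a) = pres_class UNIV (rels_C p) gen_a
           \<and> \<phi> (pres_class UNIV (rels_G p) gen_b) = pres_class UNIV (rels_C p) gen_b)
    \<and> (\<forall>\<phi>. \<phi> \<in> hom (G_grp p) (CpCp p)
           \<and> \<phi> (pres_class UNIV (rels_G p) gen_a) = pres_class UNIV (rels_C p) gen_a
           \<and> \<phi> (pres_class UNIV (rels_G p) gen_b) = pres_class UNIV (rels_C p) gen_b
           \<longrightarrow> kernel (G_grp p) (CpCp p) \<phi> \<noteq> {\<one>\<^bsub>G_grp p\<^esub>})
    \<and> \<not> residually_nilpotent (G_grp p)"
proof -
  have nontrivial: "pres_class UNIV (rels_G p) gen_a [^]\<^bsub>G_grp p\<^esub> p \<noteq> \<one>\<^bsub>G_grp p\<^esub>"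
    using a_power_nontrivial prime_ge_2_nat[OF assms(1)] by blast
  have "pres_quot (rels_C p) \<in> epi (G_grp p) (CpCp p)"
    unfolding G_grp_def CpCp_def
    by (rule pres_quot_epi[OF rels_G_closed rels_C_closed rels_G_hold_in_C])
  moreover have "pres_quot (rels_C p) (pres_class UNIV (rels_G p) w) = pres_class UNIV (rels_C p) w"
    if "w \<in> carrier F2" for w
    by (rule pres_quot_class[OF rels_G_closed rels_C_closed rels_G_hold_in_C that])
  moreover have "kernel (G_grp p) (CpCp p) \<phi> \<noteq> {\<one>\<^bsub>G_grp p\<^esub>}"
    if "\<phi> \<in> hom (G_grp p) (CpCp p)"
      "\<phi> (pres_class UNIV (rels_G p) gen_a) = pres_class UNIV (rels_C p) gen_a" for \<phi>
    using a_power_in_kernel[OF that] nontrivial by blast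
  moreover have "\<not> residually_nilpotent (G_grp p)"
    using a_power_in_lower_central nontrivial unfolding residually_nilpotent_def by blast
  ultimately show ?thesis using nontrivial gen_a_closed gen_b_closed by blast
qed

end
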